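(* Let $N_t, N_c, N_{RF}, K, N_s$ be positive integers with $K N_s \le N_{RF}$. Let $\theta_1,\dots,\theta_{N_c}\in\mathbb{R}$, let $\mathbf{c}=\frac{1}{\sqrt{N_c}}[e^{j\theta_1},\dots,e^{j\theta_{N_c}}]^T\in\mathbb{C}^{N_c}$, and let $\mathbf{C}=\mathrm{blkdiag}(\mathbf{c},\dots,\mathbf{c})\in\mathbb{C}^{N_cN_{RF}\times N_{RF}}$ be the block-diagonal matrix with $N_{RF}$ copies of $\mathbf{c}$ on its diagonal. Let $\mathbf{F}_{\mathrm{opt}}\in\mathbb{C}^{N_t\times KN_s}$, let $\mathbf{S}\in\{0,1\}^{N_t\times N_cN_{RF}}$, let $\alpha\in\mathbb{R}$, and let $\mathbf{F}_{\mathrm{DD}}\in\mathbb{C}^{N_{RF}\times KN_s}$ satisfy $\mathbf{F}_{\mathrm{DD}}^H\mathbf{F}_{\mathrm{DD}}=\mathbf{I}_{KN_s}$. Set $\mathbf{F}_{\mathrm{BB}}=\alpha\mathbf{F}_{\mathrm{DD}}$. Then $$\left\|\mathbf{F}_{\mathrm{opt}}-\mathbf{S}\mathbf{C}\mathbf{F}_{\mathrm{BB}}\right\|_F^2\le \left\|\mathbf{F}_{\mathrm{opt}}\right\|_F^2-2\alpha\,\Re\,\mathrm{tr}\!\left(\mathbf{F}_{\mathrm{DD}}\mathbf{F}_{\mathrm{opt}}^H\mathbf{S}\mathbf{C}\right)+\alpha^2\left\|\mathbf{S}\right\|_F^2 .$$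
   Context: $j$ denotes the imaginary unit, $(\cdot)^H$ the conjugate transpose, $\|\cdot\|_F$ the Frobenius norm, $\mathrm{tr}$ the trace and $\Re$ the real part. In the application, $\mathbf{S}\mathbf{C}$ is the analog precoder built from $N_c$ fixed phase shifters and a binary switch matrix $\mathbf{S}$, and $\mathbf{F}_{\mathrm{opt}}$ is a fully digital precoder to be approximated. *)

theory Defs
  imports Complex_Main "Jordan_Normal_Form.Matrix"
begin

definition herm :: "complex mat \<Rightarrow> complex mat" where
  "herm A = mat (dim_col A) (dim_row A) (\<lambda>(i,j). cnj (A $$ (j,i)))"

definition mtrace :: "complex mat \<Rightarrow> complex" where
  "mtrace A = (\<Sum>i<dim_row A. A $$ (i,i))"

definition frob_sq :: "complex mat \<Rightarrow> real" where
  "frob_sq A = (\<Sum>i<dim_row A. \<Sum>j<dim_col A. (cmod (A $$ (i,j)))\<^sup>2)"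

(* the vector c = (1/sqrt Nc) [e^{j theta_1}, ..., e^{j theta_Nc}]^T (0-indexed) *)
definition cvec :: "nat \<Rightarrow> (nat \<Rightarrow> real) \<Rightarrow> nat \<Rightarrow> complex" where
  "cvec Nc \<theta> i = exp (\<i> * complex_of_real (\<theta> i)) / complex_of_real (sqrt (real Nc))"

(* C = blkdiag(c,...,c) with NRF copies: an (Nc*NRF) x NRF matrix *)
definition Cmat :: "nat \<Rightarrow> nat \<Rightarrow> (nat \<Rightarrow> real) \<Rightarrow> complex mat" where
  "Cmat Nc NRF \<theta> = mat (Nc * NRF) NRF
     (\<lambda>(i,k). if i div Nc = k then cvec Nc \<theta> (i mod Nc) else 0)"

end

theory Submission
  imports Defs
begin

text \<open>
  Write \<open>M = S C\<close>. Expanding the square gives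
  \<open>\<parallel>F\<^sub>o\<^sub>p\<^sub>t - \<alpha> M F\<^sub>D\<^sub>D\<parallel>\<^sup>2 = \<parallel>F\<^sub>o\<^sub>p\<^sub>t\<parallel>\<^sup>2 - 2\<alpha> Re \<langle>F\<^sub>o\<^sub>p\<^sub>t, M F\<^sub>D\<^sub>D\<rangle> + \<alpha>\<^sup>2 \<parallel>M F\<^sub>D\<^sub>D\<parallel>\<^sup>2\<close>,
  and the cross term is the trace in the statement by cyclicity of the trace. Both \<open>F\<^sub>D\<^sub>D\<close>
  and \<open>C\<close> have orthonormal columns (each block \<open>c\<close> has unit norm), and multiplying on
  the right by such a matrix cannot increase the Frobenius norm (Bessel's inequality
  applied to each row). Hence \<open>\<parallel>S C F\<^sub>D\<^sub>D\<parallel>\<^sup>2 \<le> \<parallel>S C\<parallel>\<^sup>2 \<le> \<parallel>S\<parallel>\<^sup>2\<close>. Neither the binary entries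
  of \<open>S\<close> nor \<open>K N\<^sub>s \<le> N\<^sub>R\<^sub>F\<close> is needed for the inequality.
\<close>

definition frob_inner :: "complex mat \<Rightarrow> complex mat \<Rightarrow> complex" where
  "frob_inner A B = (\<Sum>i<dim_row A. \<Sum>j<dim_col A. cnj (A $$ (i,j)) * B $$ (i,j))"

lemma sum_lessThan_mult_blocks:
  fixes g :: "nat \<Rightarrow> 'a::comm_monoid_add"
  shows "(\<Sum>j<r * c. g j) = (\<Sum>k<r. \<Sum>t<c. g (k * c + t))"
proof -
  have "(\<Sum>j<r * c. g j) = (\<Sum>k<r. sum g {k * c..<k * c + c})"
    by (rule sum.nat_group[symmetric])
  also have "\<dots> = (\<Sum>k<r. \<Sum>t<c. g (k * c + t))"
  proof (rule sum.cong[OF refl])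
    fix k
    have "sum g {0 + k * c..<c + k * c} = (\<Sum>t = 0..<c. g (t + k * c))"
      by (rule sum.shift_bounds_nat_ivl)
    then show "sum g {k * c..<k * c + c} = (\<Sum>t<c. g (k * c + t))"
      by (simp add: add.commute atLeast0LessThan)
  qed
  finally show ?thesis .
qed

lemma bessel_inequality:
  fixes x :: "nat \<Rightarrow> complex" and D :: "nat \<Rightarrow> nat \<Rightarrow> complex"
  assumes orthonormal: "\<And>j k. j < m \<Longrightarrow> k < m \<Longrightarrow>
             (\<Sum>a<n. cnj (D a j) * D a k) = (if j = k then 1 else 0)"
  shows "(\<Sum>j<m. (cmod (\<Sum>a<n. x a * D a j))\<^sup>2) \<le> (\<Sum>a<n. (cmod (x a))\<^sup>2)"
proof -
  define y where "y j = (\<Sum>a<n. x a * D a j)" for j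
  define w where "w a = (\<Sum>j<m. y j * cnj (D a j))" for a
  \<comment> \<open>\<open>w\<close> is the projection of \<open>x\<close> onto the span of the columns, so \<open>\<parallel>x - w\<parallel>\<^sup>2 = \<parallel>x\<parallel>\<^sup>2 - \<parallel>y\<parallel>\<^sup>2\<close>.\<close>
  have expand: "(x a - w a) * cnj (x a - w a)
      = x a * cnj (x a) - x a * cnj (w a) - cnj (x a) * w a + w a * cnj (w a)" for a
    by (simp add: algebra_simps)
  have x_w: "(\<Sum>a<n. x a * cnj (w a)) = (\<Sum>j<m. y j * cnj (y j))"
  proof -
    have "(\<Sum>a<n. x a * cnj (w a)) = (\<Sum>a<n. \<Sum>j<m. cnj (y j) * (x a * D a j))"
      by (simp add: w_def sum_distrib_left algebra_simps)
    also have "\<dots> = (\<Sum>j<m. cnj (y j) * y j)"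
      by (subst sum.swap) (simp add: y_def sum_distrib_left)
    finally show ?thesis by (simp add: mult.commute)
  qed
  have w_x: "(\<Sum>a<n. cnj (x a) * w a) = (\<Sum>j<m. y j * cnj (y j))"
  proof -
    have "(\<Sum>a<n. cnj (x a) * w a) = cnj (\<Sum>a<n. x a * cnj (w a))" by simp
    then show ?thesis using x_w by (simp add: mult.commute)
  qed
  have w_w: "(\<Sum>a<n. w a * cnj (w a)) = (\<Sum>j<m. y j * cnj (y j))"
  proof -
    have "(\<Sum>a<n. w a * cnj (w a))
        = (\<Sum>a<n. \<Sum>k<m. \<Sum>j<m. y j * cnj (y k) * (cnj (D a j) * D a k))"
      by (simp add: w_def sum_distrib_left sum_distrib_right algebra_simps)
    also have "\<dots> = (\<Sum>k<m. \<Sum>j<m. y j * cnj (y k) * (\<Sum>a<n. cnj (D a j) * D a k))"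
      by (subst sum.swap, rule sum.cong[OF refl], subst sum.swap)
         (simp add: sum_distrib_left)
    also have "\<dots> = (\<Sum>j<m. y j * cnj (y j))"
      by (simp add: orthonormal if_distrib cong: if_cong)
    finally show ?thesis .
  qed
  have "(\<Sum>a<n. (x a - w a) * cnj (x a - w a))
      = (\<Sum>a<n. x a * cnj (x a)) - (\<Sum>j<m. y j * cnj (y j))"
    by (simp only: expand sum.distrib sum_subtractf x_w w_x w_w) simp
  then have "complex_of_real (\<Sum>a<n. (cmod (x a - w a))\<^sup>2)
      = complex_of_real ((\<Sum>a<n. (cmod (x a))\<^sup>2) - (\<Sum>j<m. (cmod (y j))\<^sup>2))"
    by (simp only: of_real_sum of_real_diff complex_norm_square)
  then have "(\<Sum>a<n. (cmod (x a - w a))\<^sup>2) = (\<Sum>a<n. (cmod (x a))\<^sup>2) - (\<Sum>j<m. (cmod (y j))\<^sup>2)"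
    by (simp only: of_real_eq_iff)
  moreover have "0 \<le> (\<Sum>a<n. (cmod (x a - w a))\<^sup>2)"
    by (intro sum_nonneg) simp
  ultimately show ?thesis by (simp add: y_def)
qed

lemma herm_carrier: "A \<in> carrier_mat n m \<Longrightarrow> herm A \<in> carrier_mat m n"
  by (simp add: herm_def)

lemma index_herm_mult:
  assumes "A \<in> carrier_mat k n" "B \<in> carrier_mat k m" "i < n" "j < m"
  shows "(herm A * B) $$ (i,j) = (\<Sum>l<k. cnj (A $$ (l,i)) * B $$ (l,j))"
  using assms by (simp add: herm_def scalar_prod_def atLeast0LessThan)

lemma mtrace_mult:
  assumes "A \<in> carrier_mat n m" "B \<in> carrier_mat m n"
  shows "mtrace (A * B) = (\<Sum>i<n. \<Sum>j<m. A $$ (i,j) * B $$ (j,i))"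
  using assms by (simp add: mtrace_def scalar_prod_def atLeast0LessThan)

lemma mtrace_mult_comm:
  assumes "A \<in> carrier_mat n m" "B \<in> carrier_mat m n"
  shows "mtrace (A * B) = mtrace (B * A)"
  using assms by (simp add: mtrace_mult sum.swap[of _ "{..<n}"] mult.commute)

lemma mtrace_herm_mult:
  assumes "A \<in> carrier_mat n m" "B \<in> carrier_mat n m"
  shows "mtrace (herm A * B) = frob_inner A B"
  using assms
  by (simp add: mtrace_def frob_inner_def herm_def scalar_prod_def atLeast0LessThan sum.swap[of _ "{..<m}"])

lemma frob_sq_diff_smult:
  assumes "A \<in> carrier_mat n m" "B \<in> carrier_mat n m"
  shows "frob_sq (A - complex_of_real \<alpha> \<cdot>\<^sub>m B)
       = frob_sq A - 2 * \<alpha> * Re (frob_inner A B) + \<alpha>\<^sup>2 * frob_sq B"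
proof -
  have entry: "(cmod (a - complex_of_real \<alpha> * b))\<^sup>2
      = (cmod a)\<^sup>2 - 2 * \<alpha> * Re (cnj a * b) + \<alpha>\<^sup>2 * (cmod b)\<^sup>2" for a b :: complex
    unfolding cmod_power2 by (simp add: power2_eq_square algebra_simps)
  show ?thesis
    using assms by (simp add: frob_sq_def frob_inner_def entry sum_subtractf sum.distrib
        sum_distrib_left Re_sum distrib_left)
qed

lemma frob_sq_mult_orthonormal_le:
  assumes A: "A \<in> carrier_mat n k" and D: "D \<in> carrier_mat k m"
    and orthonormal: "herm D * D = 1\<^sub>m m"
  shows "frob_sq (A * D) \<le> frob_sq A"
proof -
  have columns: "(\<Sum>l<k. cnj (D $$ (l,j)) * D $$ (l,j')) = (if j = j' then 1 else 0)"
    if "j < m" "j' < m" for j j'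
    using arg_cong[OF orthonormal, of "\<lambda>M. M $$ (j,j')"] index_herm_mult[OF D D that] that
    by simp
  have "frob_sq (A * D) = (\<Sum>i<n. \<Sum>j<m. (cmod (\<Sum>l<k. A $$ (i,l) * D $$ (l,j)))\<^sup>2)"
    using A D by (simp add: frob_sq_def scalar_prod_def atLeast0LessThan)
  also have "\<dots> \<le> (\<Sum>i<n. \<Sum>l<k. (cmod (A $$ (i,l)))\<^sup>2)"
    by (intro sum_mono bessel_inequality columns)
  also have "\<dots> = frob_sq A"
    using A by (simp add: frob_sq_def)
  finally show ?thesis .
qed

lemma Cmat_carrier: "Cmat Nc NRF \<theta> \<in> carrier_mat (Nc * NRF) NRF"
  by (simp add: Cmat_def)

lemma cnj_cvec_mult_cvec:
  assumes "Nc > 0"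
  shows "cnj (cvec Nc \<theta> t) * cvec Nc \<theta> t = 1 / of_nat Nc"
proof -
  have "cnj (cvec Nc \<theta> t) * cvec Nc \<theta> t = complex_of_real ((cmod (cvec Nc \<theta> t))\<^sup>2)"
    by (simp only: complex_norm_square mult.commute)
  also have "cmod (cvec Nc \<theta> t) = 1 / sqrt (real Nc)"
    by (simp add: cvec_def norm_divide flip: cis_conv_exp)
  finally show ?thesis
    using assms by (simp add: power_divide)
qed

lemma herm_Cmat_mult_Cmat:
  assumes "Nc > 0"
  shows "herm (Cmat Nc NRF \<theta>) * Cmat Nc NRF \<theta> = 1\<^sub>m NRF"
proof (rule eq_matI)
  let ?C = "Cmat Nc NRF \<theta>"
  fix j k assume j: "j < dim_row (1\<^sub>m NRF)" and k: "k < dim_col (1\<^sub>m NRF)"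
  have block_entry: "?C $$ (b * Nc + t, c) = (if b = c then cvec Nc \<theta> t else 0)"
    if "b < NRF" "t < Nc" "c < NRF" for b t c
  proof -
    have "b * Nc + t < Suc b * Nc"
      using that by simp
    also have "\<dots> \<le> Nc * NRF"
      using that by (simp add: mult.commute mult_le_mono2 Suc_leI del: mult_Suc_right)
    finally show ?thesis using that assms by (simp add: Cmat_def)
  qed
  have "(herm ?C * ?C) $$ (j,k) = (\<Sum>l<NRF * Nc. cnj (?C $$ (l,j)) * ?C $$ (l,k))"
    using j k by (simp add: index_herm_mult[OF Cmat_carrier Cmat_carrier] mult.commute)
  also have "\<dots> = (\<Sum>b<NRF. \<Sum>t<Nc. cnj (?C $$ (b * Nc + t, j)) * ?C $$ (b * Nc + t, k))"
    by (rule sum_lessThan_mult_blocks)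
  also have "\<dots> = (\<Sum>b<NRF. if b = j \<and> b = k then (\<Sum>t<Nc. 1 / of_nat Nc) else 0)"
    using j k by (intro sum.cong refl)
      (auto simp: block_entry cnj_cvec_mult_cvec[OF assms] intro!: sum.neutral)
  also have "\<dots> = 1\<^sub>m NRF $$ (j,k)"
    using j k assms by (cases "j = k") (auto intro: sum.neutral)
  finally show "(herm ?C * ?C) $$ (j,k) = 1\<^sub>m NRF $$ (j,k)" .
qed (simp_all add: herm_def Cmat_def)

theorem lemma1:
  fixes Nt Nc NRF K Ns :: nat
    and \<theta> :: "nat \<Rightarrow> real"
    and Fopt S FDD :: "complex mat"
    and \<alpha> :: real
  assumes "Nt > 0" "Nc > 0" "NRF > 0" "K > 0" "Ns > 0"
    and "K * Ns \<le> NRF"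
    and "Fopt \<in> carrier_mat Nt (K * Ns)"
    and "S \<in> carrier_mat Nt (Nc * NRF)"
    and "\<forall>i<Nt. \<forall>j<Nc * NRF. S $$ (i,j) \<in> {0, 1}"
    and "FDD \<in> carrier_mat NRF (K * Ns)"
    and "herm FDD * FDD = 1\<^sub>m (K * Ns)"
  shows "frob_sq (Fopt - S * Cmat Nc NRF \<theta> * (complex_of_real \<alpha> \<cdot>\<^sub>m FDD))
         \<le> frob_sq Fopt
            - 2 * \<alpha> * Re (mtrace (FDD * herm Fopt * S * Cmat Nc NRF \<theta>))
            + \<alpha>\<^sup>2 * frob_sq S"
proof -
  note F = assms(7) and S = assms(8) and D = assms(10)
  define M where "M = S * Cmat Nc NRF \<theta>"
  have M: "M \<in> carrier_mat Nt NRF"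
    using S by (simp add: M_def Cmat_carrier)
  have hF: "herm Fopt \<in> carrier_mat (K * Ns) Nt"
    using F by (rule herm_carrier)
  have "FDD * herm Fopt * S * Cmat Nc NRF \<theta> = FDD * herm Fopt * M"
    using D hF S Cmat_carrier unfolding M_def by (meson assoc_mult_mat mult_carrier_mat)
  also have "\<dots> = FDD * (herm Fopt * M)"
    using D hF M by simp
  finally have "mtrace (FDD * herm Fopt * S * Cmat Nc NRF \<theta>) = mtrace (herm Fopt * M * FDD)"
    using D hF M by (simp add: mtrace_mult_comm[of FDD _ _ "herm Fopt * M"])
  also have "\<dots> = frob_inner Fopt (M * FDD)"
    using hF M D by (simp add: mtrace_herm_mult[OF F])
  finally have trace: "mtrace (FDD * herm Fopt * S * Cmat Nc NRF \<theta>) = frob_inner Fopt (M * FDD)" .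
  have "frob_sq (M * FDD) \<le> frob_sq M"
    by (rule frob_sq_mult_orthonormal_le[OF M D assms(11)])
  also have "\<dots> \<le> frob_sq S"
    unfolding M_def
    by (rule frob_sq_mult_orthonormal_le[OF S Cmat_carrier herm_Cmat_mult_Cmat[OF assms(2)]])
  finally have "\<alpha>\<^sup>2 * frob_sq (M * FDD) \<le> \<alpha>\<^sup>2 * frob_sq S"
    by (simp add: mult_left_mono)
  moreover have "S * Cmat Nc NRF \<theta> * (complex_of_real \<alpha> \<cdot>\<^sub>m FDD) = complex_of_real \<alpha> \<cdot>\<^sub>m (M * FDD)"
    using M D by (simp add: M_def mult_smult_distrib)
  ultimately show ?thesis
    using frob_sq_diff_smult[OF F, of "M * FDD" \<alpha>] M D by (simp add: trace)
qed

end
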